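(* Let $M_G$ be a mixed graph, let $W\subset V(M_G)$ be non-empty, let $U=V(M_G)\setminus W$, and suppose $M_G$ contains no arc $\overrightarrow{uw}$ with $u\in U$ and $w\in W$. Let $M_{G'}$ be obtained from $M_G$ by replacing every arc $\overrightarrow{wu}$ ($w\in W$, $u\in U$) with the undirected edge $\{w,u\}$ and every undirected edge $\{u,w\}$ ($u\in U$, $w\in W$) with the arc $\overrightarrow{uw}$ (all other edges unchanged). Then $M_{G'}$ and $M_G$ are cospectral.
   Context: A mixed graph $M_G$ is obtained from a finite simple graph $G$ by orienting the edges of some subset of $E(G)$; oriented edges are arcs $\overrightarrow{uv}$, the others are undirected edges $\{u,v\}$. With $\omega=\frac{1+\mathbf{i}\sqrt3}{2}$, the matrix $N(M_G)$ has $(u,v)$-entry $\omega$ if $\overrightarrow{uv}$ is an arc, $\bar\omega$ if $\overrightarrow{vu}$ is an arc, $1$ if $\{u,v\}$ is an undirected edge, $0$ otherwise. Two mixed graphs are cospectral if their matrices $N$ have the same multiset of eigenvalues. *)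

theory Defs
  imports "Jordan_Normal_Form.Char_Poly" "HOL-Computational_Algebra.Polynomial"
begin

text \<open>A mixed graph on the vertex set {0..<n}: E is the set of undirected edges, stored as a
 symmetric relation (both (u,v) and (v,u) for the edge {u,v}); A is the set of arcs, (u,v) in A
 meaning the arc from u to v.\<close>

definition mixed_graph :: "nat \<Rightarrow> (nat \<times> nat) set \<Rightarrow> (nat \<times> nat) set \<Rightarrow> bool" where
  "mixed_graph n E A \<longleftrightarrow>
     E \<subseteq> {..<n} \<times> {..<n} \<and> A \<subseteq> {..<n} \<times> {..<n} \<and>
     (\<forall>u v. (u,v) \<in> E \<longrightarrow> (v,u) \<in> E) \<and>
     (\<forall>u. (u,u) \<notin> E \<and> (u,u) \<notin> A) \<and>
     (\<forall>u v. (u,v) \<in> A \<longrightarrow> (v,u) \<notin> A \<and> (u,v) \<notin> E)"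

definition omega :: complex where
  "omega = Complex (1/2) (sqrt 3 / 2)"

definition Nmat :: "nat \<Rightarrow> (nat \<times> nat) set \<Rightarrow> (nat \<times> nat) set \<Rightarrow> complex mat" where
  "Nmat n E A = mat n n (\<lambda>(u,v).
      if (u,v) \<in> A then omega
      else if (v,u) \<in> A then cnj omega
      else if (u,v) \<in> E then 1 else 0)"

definition eigenvalue_mset :: "complex mat \<Rightarrow> complex multiset" where
  "eigenvalue_mset M = proots (char_poly M)"

definition cospectral :: "complex mat \<Rightarrow> complex mat \<Rightarrow> bool" where
  "cospectral M M' \<longleftrightarrow> eigenvalue_mset M = eigenvalue_mset M'"

definition switch_arcs :: "nat \<Rightarrow> nat set \<Rightarrow> (nat \<times> nat) set \<Rightarrow> (nat \<times> nat) set \<Rightarrow> (nat \<times> nat) set" where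
  "switch_arcs n W E A =
     (A - {(w,u). w \<in> W \<and> u \<in> {..<n} - W})
     \<union> {(u,w). u \<in> {..<n} - W \<and> w \<in> W \<and> (u,w) \<in> E}"

definition switch_edges :: "nat \<Rightarrow> nat set \<Rightarrow> (nat \<times> nat) set \<Rightarrow> (nat \<times> nat) set \<Rightarrow> (nat \<times> nat) set" where
  "switch_edges n W E A =
     (E - {(x,y). (x \<in> W \<and> y \<in> {..<n} - W) \<or> (x \<in> {..<n} - W \<and> y \<in> W)})
     \<union> {(w,u). w \<in> W \<and> u \<in> {..<n} - W \<and> (w,u) \<in> A}
     \<union> {(u,w). w \<in> W \<and> u \<in> {..<n} - W \<and> (w,u) \<in> A}"

end

theory Submission
  imports Defs
begin

text \<open>With \<open>D\<close> the diagonal matrix having \<open>\<omega>\<close> conjugated on \<open>W\<close> and \<open>1\<close> on \<open>U\<close>, the switched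
 matrix is \<open>D N D\<^sup>-\<^sup>1\<close>, since \<open>D\<^sup>-\<^sup>1\<close> is the conjugate of \<open>D\<close> (\<open>\<omega>\<close> has modulus 1). Conjugating
 by \<open>D\<close> leaves the blocks \<open>W \<times> W\<close> and \<open>U \<times> U\<close> unchanged and multiplies each \<open>(w,u)\<close> entry by
 the conjugate of \<open>\<omega>\<close> (and \<open>(u,w)\<close> by \<open>\<omega>\<close>): an arc from \<open>w\<close> to \<open>u\<close> (entry \<open>\<omega>\<close>) becomes an edge
 (entry 1) and an edge (entry 1) becomes an arc from \<open>u\<close> to \<open>w\<close>. Because there are no arcs from
 \<open>U\<close> to \<open>W\<close>, no other entries occur in these blocks. Similar matrices have equal characteristic
 polynomials, hence the same eigenvalues.\<close>

lemma omega_mult_cnj [simp]: "omega * cnj omega = 1"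
proof -
  have "sqrt 3 * sqrt 3 = (3::real)" by simp
  then show ?thesis by (simp add: omega_def complex_eq_iff)
qed

lemma cnj_omega_mult [simp]: "cnj omega * omega = 1"
  using omega_mult_cnj by (simp add: mult.commute)

lemma cospectral_if_similar_mat: "similar_mat M M' \<Longrightarrow> cospectral M M'"
  by (simp add: cospectral_def eigenvalue_mset_def char_poly_similar)

lemma similar_mat_diagonal_scaling:
  fixes M :: "'a :: comm_ring_1 mat"
  assumes M: "M \<in> carrier_mat n n" and inverse: "\<And>i. i < n \<Longrightarrow> d i * e i = 1"
  shows "similar_mat (mat n n (\<lambda>(i,j). d i * M $$ (i,j) * e j)) M"
proof (rule similar_matI)
  have "mat_diag n (\<lambda>i. d i * e i) = 1\<^sub>m n"
    using inverse by (auto intro!: eq_matI simp: mat_diag_def)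
  then show "mat_diag n d * mat_diag n e = 1\<^sub>m n" "mat_diag n e * mat_diag n d = 1\<^sub>m n"
    by (simp_all add: mult.commute)
  show "mat n n (\<lambda>(i,j). d i * M $$ (i,j) * e j) = mat_diag n d * M * mat_diag n e"
    using M by (auto intro!: eq_matI simp: mat_diag_mult_left mat_diag_mult_right[of _ n])
qed (use M in auto)

definition switching_scale :: "nat set \<Rightarrow> nat \<Rightarrow> complex" where
  "switching_scale W i = (if i \<in> W then cnj omega else 1)"

lemma Nmat_switch_entry:
  assumes "mixed_graph n E A" and no_arc_into_W: "\<forall>u \<in> {..<n} - W. \<forall>w \<in> W. (u,w) \<notin> A"
    and ij: "i < n" "j < n"
  shows "Nmat n (switch_edges n W E A) (switch_arcs n W E A) $$ (i,j)
    = switching_scale W i * Nmat n E A $$ (i,j) * cnj (switching_scale W j)"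
proof -
  have E_sym: "(i,j) \<in> E \<longleftrightarrow> (j,i) \<in> E"
    and arc_ij: "(i,j) \<in> A \<Longrightarrow> (i,j) \<notin> E \<and> (j,i) \<notin> A"
    and arc_ji: "(j,i) \<in> A \<Longrightarrow> (j,i) \<notin> E \<and> (i,j) \<notin> A"
    using assms(1) unfolding mixed_graph_def by blast+
  consider "i \<in> W" "j \<in> W" | "i \<notin> W" "j \<notin> W" | "i \<in> W" "j \<notin> W" "(j,i) \<notin> A"
    | "i \<notin> W" "j \<in> W" "(i,j) \<notin> A"
    using no_arc_into_W ij by blast
  then show ?thesis
    using ij E_sym arc_ij arc_ji
    by cases (auto simp: Nmat_def switching_scale_def switch_edges_def switch_arcs_def)
qed

theorem theorem4p1:
  fixes n :: nat and E A :: "(nat \<times> nat) set" and W :: "nat set"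
  assumes "mixed_graph n E A"
    and "W \<subseteq> {..<n}" and "W \<noteq> {}"
    and "\<forall>u \<in> {..<n} - W. \<forall>w \<in> W. (u,w) \<notin> A"
  shows "cospectral (Nmat n (switch_edges n W E A) (switch_arcs n W E A)) (Nmat n E A)"
proof -
  let ?s = "switching_scale W"
  have "Nmat n (switch_edges n W E A) (switch_arcs n W E A)
      = mat n n (\<lambda>(i,j). ?s i * Nmat n E A $$ (i,j) * cnj (?s j))"
    using Nmat_switch_entry[OF assms(1,4)] by (intro eq_matI) (auto simp: Nmat_def)
  also have "similar_mat \<dots> (Nmat n E A)"
    by (rule similar_mat_diagonal_scaling) (auto simp: Nmat_def switching_scale_def)
  finally show ?thesis
    by (rule cospectral_if_similar_mat)
qed

end
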